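(* Let $G$ be a finite group and let $H,K$ be subgroups of $G$ with $\Pr(H,K)\ge\epsilon>0$. Then there exists a subset $X$ of $H$ such that, for $H_0=\langle X\rangle$: (1) $|H:H_0|\le 2/\epsilon-1$; (2) $|K:C_K(x)|\le 2/\epsilon$ for every $x\in X$; (3) $|K:C_K(x)|\le (2/\epsilon)^{6/\epsilon}$ for every $x\in H_0$.
   Context: For subsets $X,Y$ of a finite group, $\Pr(X,Y)=|\{(x,y)\in X\times Y: xy=yx\}|/(|X||Y|)$. *)

theory Defs
  imports "HOL-Algebra.Algebra"
begin

definition comm_prob :: "('a, 'b) monoid_scheme \<Rightarrow> 'a set \<Rightarrow> 'a set \<Rightarrow> real" where
  "comm_prob G A B =
     real (card {(x, y). x \<in> A \<and> y \<in> B \<and> x \<otimes>\<^bsub>G\<^esub> y = y \<otimes>\<^bsub>G\<^esub> x})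
       / (real (card A) * real (card B))"

definition centralizer_in :: "('a, 'b) monoid_scheme \<Rightarrow> 'a set \<Rightarrow> 'a \<Rightarrow> 'a set" where
  "centralizer_in G K x = {k \<in> K. x \<otimes>\<^bsub>G\<^esub> k = k \<otimes>\<^bsub>G\<^esub> x}"

definition sub_index :: "('a, 'b) monoid_scheme \<Rightarrow> 'a set \<Rightarrow> 'a set \<Rightarrow> nat" where
  "sub_index G H L = card {r_coset G L h | h. h \<in> H}"

end

theory Submission
  imports Defs
begin

(* Let S be the set of x in H with |K : C_K(x)| <= 2/eps. Pr(H,K) is the average over x in H
   of 1/|K : C_K(x)|, which is at most 1 on S and below eps/2 off S; hence eps |H| <= (2 - eps) |S|
   and |H : <S>| <= |H|/|S| <= 2/eps - 1.
   S is closed under inverses, and C_K(x) \<inter> C_K(y) \<subseteq> C_K(xy) together with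
   |K : A \<inter> B| <= |K : A| |K : B| makes the index submultiplicative, so an element of <S> that is a product of L elements of S has index at most (2/eps)^L.
   If the word is as short as possible, the elements p_(3i) s (p_j its prefix products, s in S)
   are pairwise distinct, since a coincidence would give a shorter word; therefore
   (L div 3 + 1) |S| <= |H|, i.e. L <= 3 |H|/|S| <= 6/eps. *)

lemma (in group) sub_index_mult_card:
  assumes "subgroup K G" "subgroup L G" "L \<subseteq> K"
  shows "sub_index G K L * card L = card K"
proof -
  interpret K: group "G\<lparr>carrier := K\<rparr>" using subgroup_imp_group[OF assms(1)] .
  have "subgroup L (G\<lparr>carrier := K\<rparr>)" using subgroup_incl assms by blast
  moreover have "{r_coset G L h | h. h \<in> K} = rcosets\<^bsub>G\<lparr>carrier := K\<rparr>\<^esub> L"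
    by (auto simp: RCOSETS_def r_coset_def)
  ultimately show ?thesis using K.lagrange unfolding sub_index_def order_def by simp
qed

lemma (in group) sub_index_eq_card_div:
  assumes "subgroup K G" "subgroup L G" "L \<subseteq> K" "finite K"
  shows "real (sub_index G K L) = real (card K) / real (card L)"
proof -
  have "finite L" using assms(3,4) finite_subset by blast
  then have "card L > 0" using subgroup.one_closed[OF assms(2)] card_gt_0_iff by blast
  moreover have "real (sub_index G K L) * real (card L) = real (card K)"
    using sub_index_mult_card[OF assms(1-3)] of_nat_mult by metis
  ultimately show ?thesis by (simp add: field_simps)
qed

lemma (in group) sub_index_antimono:
  assumes "subgroup K G" "subgroup L G" "subgroup M G" "L \<subseteq> M" "M \<subseteq> K" "finite K"
  shows "sub_index G K M \<le> sub_index G K L"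
proof -
  have "finite M" using assms(5,6) by (rule finite_subset)
  moreover have "finite L" using assms(4) \<open>finite M\<close> by (rule finite_subset)
  ultimately have "card L \<le> card M" "card L > 0"
    using assms(4) subgroup.one_closed[OF assms(2)] by (auto intro: card_mono simp: card_gt_0_iff)
  then have "real (card K) / real (card M) \<le> real (card K) / real (card L)"
    by (simp add: frac_le)
  then have "real (sub_index G K M) \<le> real (sub_index G K L)"
    using assms sub_index_eq_card_div[of K] by simp
  then show ?thesis by simp
qed

lemma (in group) r_coset_Int:
  assumes "A \<subseteq> carrier G" "B \<subseteq> carrier G" "h \<in> carrier G"
  shows "(A \<inter> B) #> h = (A #> h) \<inter> (B #> h)"
proof -
  have "a = b" if "a \<in> A" "b \<in> B" "a \<otimes> h = b \<otimes> h" for a b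
    using that assms r_cancel by blast
  then show ?thesis by (auto simp: r_coset_def)
qed

lemma (in group) sub_index_Int_le:
  assumes "subgroup K G" "finite K" "A \<subseteq> carrier G" "B \<subseteq> carrier G"
  shows "sub_index G K (A \<inter> B) \<le> sub_index G K A * sub_index G K B"
proof -
  let ?cosets = "\<lambda>L. {r_coset G L h | h. h \<in> K}"
  have "?cosets (A \<inter> B) = (\<lambda>h. (A \<inter> B) #> h) ` K" by blast
  also have "\<dots> = (\<lambda>(U, V). U \<inter> V) ` (\<lambda>h. (A #> h, B #> h)) ` K"
    unfolding image_image using assms subgroup.subset[OF assms(1)]
    by (intro image_cong) (auto simp: r_coset_Int)
  also have "card \<dots> \<le> card ((\<lambda>h. (A #> h, B #> h)) ` K)"
    using assms(2) by (intro card_image_le) simp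
  also have "\<dots> \<le> card (?cosets A \<times> ?cosets B)"
    using assms(2) by (intro card_mono) auto
  finally show ?thesis by (simp add: sub_index_def card_cartesian_product)
qed

lemma (in group) subgroup_centralizer_in:
  assumes "subgroup K G" "x \<in> carrier G"
  shows "subgroup (centralizer_in G K x) G"
proof -
  have K: "K \<subseteq> carrier G" using assms(1) subgroup.subset by blast
  show ?thesis
  proof (rule subgroupI)
    show "centralizer_in G K x \<subseteq> carrier G" using K by (auto simp: centralizer_in_def)
    show "centralizer_in G K x \<noteq> {}"
      using assms subgroup.one_closed by (fastforce simp: centralizer_in_def)
  next
    fix a b assume a: "a \<in> centralizer_in G K x" and b: "b \<in> centralizer_in G K x"
    from a have aK: "a \<in> K" and ax: "x \<otimes> a = a \<otimes> x" by (auto simp: centralizer_in_def)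
    from b have bK: "b \<in> K" and bx: "x \<otimes> b = b \<otimes> x" by (auto simp: centralizer_in_def)
    have aG: "a \<in> carrier G" and bG: "b \<in> carrier G" using aK bK K by auto
    have "x \<otimes> inv a = inv a \<otimes> (a \<otimes> x) \<otimes> inv a"
      using aG assms(2) by (simp add: m_assoc[symmetric])
    also have "\<dots> = inv a \<otimes> x" using aG assms(2) by (simp add: ax[symmetric] m_assoc)
    finally show "inv a \<in> centralizer_in G K x"
      using aK assms(1) by (simp add: centralizer_in_def subgroup.m_inv_closed)
    have "x \<otimes> (a \<otimes> b) = (a \<otimes> b) \<otimes> x"
      using aG bG assms(2) by (simp add: m_assoc[symmetric] ax) (simp add: m_assoc bx)
    then show "a \<otimes> b \<in> centralizer_in G K x"
      using aK bK assms(1) by (simp add: centralizer_in_def subgroup.m_closed)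
  qed
qed

lemma (in group) centralizer_in_one:
  "K \<subseteq> carrier G \<Longrightarrow> centralizer_in G K \<one> = K"
  by (auto simp: centralizer_in_def)

lemma (in group) centralizer_in_inv:
  assumes "K \<subseteq> carrier G" "x \<in> carrier G"
  shows "centralizer_in G K (inv x) = centralizer_in G K x"
proof -
  have "inv x \<otimes> k = k \<otimes> inv x \<longleftrightarrow> x \<otimes> k = k \<otimes> x" if "k \<in> carrier G" for k
    using that assms(2) by (metis inv_closed inv_inv m_assoc m_closed inv_solve_left inv_solve_right)
  then show ?thesis using assms(1) by (auto simp: centralizer_in_def)
qed

lemma (in group) centralizer_in_Int_subset_mult:
  assumes "K \<subseteq> carrier G" "a \<in> carrier G" "b \<in> carrier G"
  shows "centralizer_in G K a \<inter> centralizer_in G K b \<subseteq> centralizer_in G K (a \<otimes> b)"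
proof
  fix k assume "k \<in> centralizer_in G K a \<inter> centralizer_in G K b"
  then have k: "k \<in> K" "a \<otimes> k = k \<otimes> a" "b \<otimes> k = k \<otimes> b" by (auto simp: centralizer_in_def)
  then have "k \<in> carrier G" using assms(1) by blast
  then have "a \<otimes> b \<otimes> k = k \<otimes> (a \<otimes> b)"
    using assms k by (simp add: m_assoc) (simp add: m_assoc[symmetric])
  then show "k \<in> centralizer_in G K (a \<otimes> b)" using k(1) by (simp add: centralizer_in_def)
qed

lemma (in group) sub_index_centralizer_in_mult_le:
  assumes "subgroup K G" "finite K" "a \<in> carrier G" "b \<in> carrier G"
  shows "sub_index G K (centralizer_in G K (a \<otimes> b))
           \<le> sub_index G K (centralizer_in G K a) * sub_index G K (centralizer_in G K b)"
proof -
  let ?C = "centralizer_in G K"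
  have K: "K \<subseteq> carrier G" using assms(1) subgroup.subset by blast
  have sub: "subgroup (?C a) G" "subgroup (?C b) G" "subgroup (?C (a \<otimes> b)) G"
    using assms subgroup_centralizer_in by auto
  have "sub_index G K (?C (a \<otimes> b)) \<le> sub_index G K (?C a \<inter> ?C b)"
    using sub assms K centralizer_in_Int_subset_mult
    by (intro sub_index_antimono) (auto simp: subgroups_Inter_pair centralizer_in_def)
  also have "\<dots> \<le> sub_index G K (?C a) * sub_index G K (?C b)"
    using sub assms(1,2) by (intro sub_index_Int_le) (auto simp: subgroup.subset)
  finally show ?thesis .
qed

definition word_prod :: "('a, 'b) monoid_scheme \<Rightarrow> 'a list \<Rightarrow> 'a" where
  "word_prod G ws = foldr (\<otimes>\<^bsub>G\<^esub>) ws \<one>\<^bsub>G\<^esub>"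

lemma word_prod_Nil [simp]: "word_prod G [] = \<one>\<^bsub>G\<^esub>"
  and word_prod_Cons [simp]: "word_prod G (a # ws) = a \<otimes>\<^bsub>G\<^esub> word_prod G ws"
  by (simp_all add: word_prod_def)

lemma (in group) word_prod_in_subgroup:
  "subgroup H G \<Longrightarrow> set ws \<subseteq> H \<Longrightarrow> word_prod G ws \<in> H"
  by (induction ws) (auto intro: subgroup.one_closed subgroup.m_closed)

lemma (in group) word_prod_closed:
  "set ws \<subseteq> carrier G \<Longrightarrow> word_prod G ws \<in> carrier G"
  using word_prod_in_subgroup[OF subgroup_self] .

lemma (in group) word_prod_append:
  "set ws \<subseteq> carrier G \<Longrightarrow> set vs \<subseteq> carrier G
    \<Longrightarrow> word_prod G (ws @ vs) = word_prod G ws \<otimes> word_prod G vs"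
  by (induction ws) (auto simp: word_prod_closed m_assoc)

lemma (in group) generate_imp_word_prod:
  assumes "Y \<subseteq> carrier G" "\<And>y. y \<in> Y \<Longrightarrow> inv y \<in> Y" "g \<in> generate G Y"
  shows "\<exists>ws. set ws \<subseteq> Y \<and> word_prod G ws = g"
  using assms(3)
proof (induction g rule: generate.induct)
  case one
  show ?case by (rule exI[of _ "[]"]) simp
next
  case (incl h)
  then show ?case using assms(1) by (intro exI[of _ "[h]"]) auto
next
  case (inv h)
  then show ?case using assms by (intro exI[of _ "[inv h]"]) auto
next
  case (eng h1 h2)
  then obtain ws vs where "set ws \<subseteq> Y" "word_prod G ws = h1" "set vs \<subseteq> Y" "word_prod G vs = h2"
    by blast
  then show ?case using assms(1) by (intro exI[of _ "ws @ vs"]) (auto simp: word_prod_append)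
qed

lemma (in group) sub_index_centralizer_in_word_prod_le:
  assumes "subgroup K G" "finite K" "Y \<subseteq> carrier G"
    and "\<And>y. y \<in> Y \<Longrightarrow> real (sub_index G K (centralizer_in G K y)) \<le> c"
    and "set ws \<subseteq> Y"
  shows "real (sub_index G K (centralizer_in G K (word_prod G ws))) \<le> c ^ length ws"
  using assms(5)
proof (induction ws)
  case Nil
  have "card K > 0" using assms(2) subgroup.one_closed[OF assms(1)] card_gt_0_iff by blast
  then have "sub_index G K K = 1" using sub_index_mult_card[OF assms(1) assms(1)] by simp
  then show ?case using centralizer_in_one[OF subgroup.subset[OF assms(1)]] by simp
next
  case (Cons a ws)
  let ?idx = "\<lambda>x. real (sub_index G K (centralizer_in G K x))"
  have "a \<in> carrier G" "word_prod G ws \<in> carrier G"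
    using Cons.prems assms(3) by (auto intro: word_prod_closed)
  then have "?idx (word_prod G (a # ws)) \<le> ?idx a * ?idx (word_prod G ws)"
    using sub_index_centralizer_in_mult_le[OF assms(1,2)] by (simp flip: of_nat_mult)
  also have "\<dots> \<le> c * c ^ length ws"
    using Cons assms(4) by (intro mult_mono) (auto intro: order_trans[OF of_nat_0_le_iff])
  finally show ?case by simp
qed

lemma (in group) minimal_word_prefix_products_distinct:
  assumes Y: "Y \<subseteq> carrier G" "\<And>y. y \<in> Y \<Longrightarrow> inv y \<in> Y"
    and ws: "set ws \<subseteq> Y"
    and minimal: "\<And>vs. set vs \<subseteq> Y \<Longrightarrow> word_prod G vs = word_prod G ws \<Longrightarrow> length ws \<le> length vs"
    and ij: "i + 3 \<le> j" "j \<le> length ws" and ab: "a \<in> Y" "b \<in> Y"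
  shows "word_prod G (take i ws) \<otimes> a \<noteq> word_prod G (take j ws) \<otimes> b"
proof
  assume eq: "word_prod G (take i ws) \<otimes> a = word_prod G (take j ws) \<otimes> b"
  have take: "set (take k ws) \<subseteq> carrier G" and drop: "set (drop k ws) \<subseteq> carrier G" for k
    using ws Y(1) by (meson order_trans set_take_subset set_drop_subset)+
  have aG: "a \<in> carrier G" and bG: "b \<in> carrier G" using ab Y(1) by auto
  define vs where "vs = take i ws @ [a, inv b] @ drop j ws"
  have "set vs \<subseteq> Y"
    using ws ab Y(2) by (auto simp: vs_def dest: in_set_takeD in_set_dropD)
  moreover have "word_prod G vs = word_prod G ws"
  proof -
    have "word_prod G vs = word_prod G (take i ws) \<otimes> a \<otimes> inv b \<otimes> word_prod G (drop j ws)"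
      using take drop aG bG by (simp add: vs_def word_prod_append word_prod_closed m_assoc)
    also have "\<dots> = word_prod G (take j ws) \<otimes> word_prod G (drop j ws)"
      using take bG by (simp add: eq word_prod_closed m_assoc)
    also have "\<dots> = word_prod G ws"
      using take drop by (simp flip: word_prod_append)
    finally show ?thesis .
  qed
  moreover have "length vs < length ws" using ij by (simp add: vs_def)
  ultimately show False using minimal by fastforce
qed

lemma (in group) minimal_word_length_bound:
  assumes H: "subgroup H G" "finite H"
    and Y: "Y \<subseteq> H" "\<And>y. y \<in> Y \<Longrightarrow> inv y \<in> Y"
    and ws: "set ws \<subseteq> Y"
    and minimal: "\<And>vs. set vs \<subseteq> Y \<Longrightarrow> word_prod G vs = word_prod G ws \<Longrightarrow> length ws \<le> length vs"
  shows "(length ws div 3 + 1) * card Y \<le> card H"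
proof -
  have YG: "Y \<subseteq> carrier G" using Y(1) subgroup.subset[OF H(1)] by blast
  define p where "p i = word_prod G (take (3 * i) ws)" for i
  define f where "f = (\<lambda>(i, a). p i \<otimes> a)"
  have pG: "p i \<in> carrier G" for i
    unfolding p_def using ws YG by (meson order_trans set_take_subset word_prod_closed)
  have "inj_on f ({0..length ws div 3} \<times> Y)"
  proof (rule inj_onI, clarify)
    fix i a j b
    assume ia: "i \<in> {0..length ws div 3}" "a \<in> Y" and jb: "j \<in> {0..length ws div 3}" "b \<in> Y"
      and "f (i, a) = f (j, b)"
    then have eq: "p i \<otimes> a = p j \<otimes> b" by (simp add: f_def)
    show "i = j \<and> a = b"
    proof (cases i j rule: linorder_cases)
      case less
      have "3 * i + 3 \<le> 3 * j" "3 * j \<le> length ws" using less jb(1) by auto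
      then have "p i \<otimes> a \<noteq> p j \<otimes> b" unfolding p_def
        using minimal_word_prefix_products_distinct[OF YG Y(2) ws minimal _ _ ia(2) jb(2)] by blast
      then show ?thesis using eq by blast
    next
      case greater
      have "3 * j + 3 \<le> 3 * i" "3 * i \<le> length ws" using greater ia(1) by auto
      then have "p j \<otimes> b \<noteq> p i \<otimes> a" unfolding p_def
        using minimal_word_prefix_products_distinct[OF YG Y(2) ws minimal _ _ jb(2) ia(2)] by blast
      then show ?thesis using eq by simp
    next
      case equal
      then show ?thesis using eq pG ia(2) jb(2) YG l_cancel by blast
    qed
  qed
  moreover have "f ` ({0..length ws div 3} \<times> Y) \<subseteq> H"
    using ws Y(1) H(1) by (auto simp: f_def p_def intro!: subgroup.m_closed word_prod_in_subgroup
        dest: in_set_takeD)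
  ultimately have "card ({0..length ws div 3} \<times> Y) \<le> card H" using H(2) by (rule card_inj_on_le)
  then show ?thesis by (simp add: card_cartesian_product)
qed

lemma (in group) generate_short_word_prod:
  assumes "subgroup H G" "finite H" "Y \<subseteq> H" "\<And>y. y \<in> Y \<Longrightarrow> inv y \<in> Y" "g \<in> generate G Y"
  obtains ws where "set ws \<subseteq> Y" "word_prod G ws = g" "(length ws div 3 + 1) * card Y \<le> card H"
proof -
  have "Y \<subseteq> carrier G" using assms(1,3) subgroup.subset by blast
  then obtain ws where ws: "set ws \<subseteq> Y \<and> word_prod G ws = g"
    and minimal: "\<And>vs. set vs \<subseteq> Y \<and> word_prod G vs = g \<Longrightarrow> length ws \<le> length vs"
    using ex_has_least_nat[of "\<lambda>ws. set ws \<subseteq> Y \<and> word_prod G ws = g" _ length]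
      generate_imp_word_prod[OF _ assms(4,5)] by metis
  then show ?thesis
    using that minimal_word_length_bound[OF assms(1-4)] by blast
qed

lemma (in group) sub_index_generate_le_card_div:
  assumes "subgroup H G" "finite H" "Y \<subseteq> H" "Y \<noteq> {}"
  shows "real (sub_index G H (generate G Y)) \<le> real (card H) / real (card Y)"
proof -
  have "Y \<subseteq> carrier G" using assms(1,3) subgroup.subset by blast
  then have gen: "subgroup (generate G Y) G" "generate G Y \<subseteq> H"
    using generate_is_subgroup generate_subgroup_incl assms(1,3) by auto
  then have "card Y \<le> card (generate G Y)"
    using assms(2) generate.incl by (metis card_mono finite_subset subsetI)
  moreover have "card Y > 0" using assms(2-4) finite_subset card_gt_0_iff by blast
  ultimately show ?thesis
    using sub_index_eq_card_div[OF assms(1) gen assms(2)] by (simp add: frac_le)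
qed

lemma comm_prob_eq_sum_card_centralizer_in:
  assumes "finite H" "finite K"
  shows "comm_prob G H K
           = (\<Sum>x\<in>H. real (card (centralizer_in G K x))) / (real (card H) * real (card K))"
proof -
  have "{(x, y). x \<in> H \<and> y \<in> K \<and> x \<otimes>\<^bsub>G\<^esub> y = y \<otimes>\<^bsub>G\<^esub> x} = Sigma H (centralizer_in G K)"
    by (auto simp: centralizer_in_def)
  moreover have "finite (centralizer_in G K x)" for x
    using assms(2) by (simp add: centralizer_in_def)
  ultimately show ?thesis using assms(1) by (simp add: comm_prob_def card_SigmaI)
qed

lemma sum_le_card_add_mult_card_diff:
  fixes f :: "'a \<Rightarrow> real"
  assumes "finite A" "Y \<subseteq> A" "\<And>x. x \<in> Y \<Longrightarrow> f x \<le> 1" "\<And>x. x \<in> A - Y \<Longrightarrow> f x \<le> \<delta>"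
  shows "sum f A \<le> real (card Y) + \<delta> * (real (card A) - real (card Y))"
proof -
  have "sum f A = sum f Y + sum f (A - Y)"
    using assms(1,2) by (metis sum.subset_diff add.commute)
  also have "\<dots> \<le> (\<Sum>x\<in>Y. 1) + (\<Sum>x\<in>A - Y. \<delta>)"
    using assms(3,4) by (intro add_mono sum_mono) auto
  finally show ?thesis
    using assms(1,2) by (simp add: card_Diff_subset finite_subset card_mono of_nat_diff algebra_simps)
qed

lemma (in group) card_small_index_centralizers:
  assumes "subgroup H G" "subgroup K G" "finite H" "finite K"
    and "0 < \<epsilon>" "\<epsilon> \<le> comm_prob G H K"
  shows "\<epsilon> * real (card H)
           \<le> (2 - \<epsilon>) * real (card {x \<in> H. real (sub_index G K (centralizer_in G K x)) \<le> 2 / \<epsilon>})"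
proof -
  let ?idx = "\<lambda>x. real (sub_index G K (centralizer_in G K x))"
  define Y where "Y = {x \<in> H. ?idx x \<le> 2 / \<epsilon>}"
  define f where "f x = real (card (centralizer_in G K x)) / real (card K)" for x
  have "card H > 0" "card K > 0"
    using assms(1-4) subgroup.one_closed card_gt_0_iff by blast+
  have f_idx: "f x = 1 / ?idx x" if "x \<in> H" for x
  proof -
    have "centralizer_in G K x \<subseteq> K" by (auto simp: centralizer_in_def)
    moreover have "subgroup (centralizer_in G K x) G"
      using that assms(1,2) subgroup.subset subgroup_centralizer_in by blast
    ultimately show ?thesis
      using sub_index_eq_card_div[OF assms(2)] assms(4) by (simp add: f_def)
  qed
  have "\<epsilon> * real (card H) \<le> sum f H"
    using assms(6) \<open>card H > 0\<close> \<open>card K > 0\<close> assms(3,4)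
    by (simp add: comm_prob_eq_sum_card_centralizer_in f_def sum_divide_distrib[symmetric] field_simps)
  also have "\<dots> \<le> real (card Y) + \<epsilon> / 2 * (real (card H) - real (card Y))"
  proof (rule sum_le_card_add_mult_card_diff)
    show "f x \<le> 1" if "x \<in> Y" for x
      using \<open>card K > 0\<close> card_mono[OF assms(4)] by (simp add: f_def centralizer_in_def)
    show "f x \<le> \<epsilon> / 2" if "x \<in> H - Y" for x
    proof -
      have "2 / \<epsilon> < ?idx x" using that by (auto simp: Y_def)
      moreover have "0 < 2 / \<epsilon>" using assms(5) by simp
      ultimately have "0 < ?idx x" by linarith
      have "2 < \<epsilon> * ?idx x" using \<open>2 / \<epsilon> < ?idx x\<close> assms(5) by (simp add: field_simps)
      with \<open>0 < ?idx x\<close> show ?thesis using that f_idx by (simp add: field_simps)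
    qed
  qed (auto simp: Y_def assms(3))
  finally show ?thesis unfolding Y_def by (simp add: right_diff_distrib left_diff_distrib)
qed

lemma div_le_two_div_minus_one:
  fixes \<epsilon> h y :: real
  assumes "\<epsilon> * h \<le> (2 - \<epsilon>) * y" "0 < \<epsilon>" "0 < h" "0 \<le> y"
  shows "0 < y" and "h / y \<le> 2 / \<epsilon> - 1"
proof -
  have "0 < (2 - \<epsilon>) * y" using assms(1-3) mult_pos_pos[of \<epsilon> h] by linarith
  then show "0 < y" using assms(4) by (auto simp: zero_less_mult_iff)
  then show "h / y \<le> 2 / \<epsilon> - 1" using assms(1,2) by (simp add: field_simps)
qed

lemma (in group) sub_index_centralizer_in_generate_le:
  assumes "subgroup H G" "subgroup K G" "finite H" "finite K"
    and "S \<subseteq> H" "\<And>x. x \<in> S \<Longrightarrow> inv x \<in> S"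
    and "\<And>x. x \<in> S \<Longrightarrow> real (sub_index G K (centralizer_in G K x)) \<le> c" "1 \<le> c"
    and "g \<in> generate G S"
  shows "real (sub_index G K (centralizer_in G K g)) \<le> c powr (3 * real (card H) / real (card S))"
proof -
  obtain ws where ws: "set ws \<subseteq> S" "word_prod G ws = g"
    and short: "(length ws div 3 + 1) * card S \<le> card H"
    using generate_short_word_prod[OF assms(1,3,5,6,9)] .
  have length: "real (length ws) \<le> 3 * real (card H) / real (card S)"
  proof (cases "S = {}")
    case False
    then have "card S > 0" using assms(3,5) finite_subset card_gt_0_iff by blast
    have "length ws * card S \<le> 3 * (length ws div 3 + 1) * card S"
      by (intro mult_le_mono1) presburger
    also have "\<dots> \<le> 3 * card H" using short by (simp only: mult.assoc)
    finally have "length ws * card S \<le> 3 * card H" .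
    with \<open>card S > 0\<close> show ?thesis by (simp add: field_simps flip: of_nat_mult)
  qed (use ws(1) in simp)
  have "real (sub_index G K (centralizer_in G K g)) \<le> c ^ length ws"
    using sub_index_centralizer_in_word_prod_le[OF assms(2,4) _ assms(7) ws(1)] ws(2)
      assms(1,5) subgroup.subset by blast
  also have "\<dots> = c powr real (length ws)" using assms(8) by (simp add: powr_realpow)
  also have "\<dots> \<le> c powr (3 * real (card H) / real (card S))"
    using length assms(8) by (rule powr_mono)
  finally show ?thesis .
qed

theorem lemma2p8:
  fixes G :: "('a, 'b) monoid_scheme" and H K :: "'a set" and \<epsilon> :: real
  assumes "group G" and "finite (carrier G)"
    and "subgroup H G" and "subgroup K G"
    and "\<epsilon> > 0" and "comm_prob G H K \<ge> \<epsilon>"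
  shows "\<exists>S \<subseteq> H.
           real (sub_index G H (generate G S)) \<le> 2 / \<epsilon> - 1
         \<and> (\<forall>x \<in> S. real (sub_index G K (centralizer_in G K x)) \<le> 2 / \<epsilon>)
         \<and> (\<forall>x \<in> generate G S.
              real (sub_index G K (centralizer_in G K x)) \<le> (2 / \<epsilon>) powr (6 / \<epsilon>))"
proof -
  interpret group G by fact
  have fin: "finite H" "finite K"
    using assms(2-4) subgroup.subset finite_subset by blast+
  define S where "S = {x \<in> H. real (sub_index G K (centralizer_in G K x)) \<le> 2 / \<epsilon>}"
  have SH: "S \<subseteq> H" and S_inv: "\<And>x. x \<in> S \<Longrightarrow> inv\<^bsub>G\<^esub> x \<in> S"
    using subgroup.subset[OF assms(3)] subgroup.subset[OF assms(4)]
      subgroup.m_inv_closed[OF assms(3)] centralizer_in_inv by (auto simp: S_def subsetD)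
  have "\<epsilon> * real (card H) \<le> (2 - \<epsilon>) * real (card S)"
    unfolding S_def using card_small_index_centralizers[OF assms(3,4) fin assms(5,6)] .
  moreover have "0 < real (card H)" using fin(1) subgroup.one_closed[OF assms(3)] card_gt_0_iff by auto
  ultimately have "0 < real (card S)" and ratio: "real (card H) / real (card S) \<le> 2 / \<epsilon> - 1"
    using div_le_two_div_minus_one assms(5) of_nat_0_le_iff by blast+
  then have "S \<noteq> {}" by auto
  have "1 \<le> real (card H) / real (card S)" using card_mono[OF fin(1) SH] \<open>0 < real (card S)\<close> by simp
  with ratio have "1 \<le> 2 / \<epsilon>" by linarith
  have "real (sub_index G K (centralizer_in G K g)) \<le> (2 / \<epsilon>) powr (6 / \<epsilon>)"
    if "g \<in> generate G S" for g
  proof -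
    have "real (sub_index G K (centralizer_in G K g))
            \<le> (2 / \<epsilon>) powr (3 * real (card H) / real (card S))"
      using sub_index_centralizer_in_generate_le[OF assms(3,4) fin SH S_inv _ _ that]
        \<open>1 \<le> 2 / \<epsilon>\<close> by (simp add: S_def)
    also have "\<dots> \<le> (2 / \<epsilon>) powr (6 / \<epsilon>)"
      using ratio \<open>1 \<le> 2 / \<epsilon>\<close> by (intro powr_mono) auto
    finally show ?thesis .
  qed
  moreover have "real (sub_index G H (generate G S)) \<le> 2 / \<epsilon> - 1"
    using sub_index_generate_le_card_div[OF assms(3) fin(1) SH \<open>S \<noteq> {}\<close>] ratio by linarith
  ultimately show ?thesis using SH by (intro exI[of _ S]) (auto simp: S_def)
qed

end
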